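(* Consider the volume-pricing market described in the context. Then: (i) $R(p)$ is unimodal on $[\eta,\infty)$ (i.e., there is $\hat p>\eta$ with $R'(p)>0$ for $\eta\le p<\hat p$, $R'(\hat p)=0$ and $R'(p)<0$ for $p>\hat p$), and the feasible price set $\mathcal P$ is non-empty and connected. (ii) If $R'(p_0)<0$, then the network is opt-saturated and the unique equilibrium price is $p^\star=p_0=p_0(\kappa_{\mathrm{peak}})$, the threshold price, which satisfies $A(p_0)=C_{3g}$ and, viewing $\kappa_{\mathrm{peak}}$ as a variable, $\frac{\partial p_0(\kappa_{\mathrm{peak}})}{\partial\kappa_{\mathrm{peak}}}>0$. (iii) If $R'(p_0)>0$, then the network is opt-unsaturated and the unique equilibrium price $p^\star=p^\star(\kappa_{\mathrm{avg}})$ is the solution of $R'(p)=0$; moreover, viewing $\kappa_{\mathrm{avg}}$ as a variable, $\frac{\partial\big(p^\star(\kappa_{\mathrm{avg}})\,\kappa_{\mathrm{avg}}\big)}{\partial\kappa_{\mathrm{avg}}}>0$.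
   Context: Market model (single cell). There are $\hat N$ users (treated as a continuum of mass $\hat N$) in one base-station cell with capacity $C_{3g}>0$ (traffic volume per time slot), and time slots $t\in T=\{1,\dots,|T|\}$. Each user's daily traffic demand $\Phi$ is random with density $f_\Phi(x)=x^{-\sigma}/Z$ for $0\le x\le\Phi_{\max}$, where $0<\sigma<1$ and $Z=\Phi_{\max}^{1-\sigma}/(1-\sigma)$. All users share a temporal preference $w(t)> 0$ with $\sum_{t\in T}w(t)=1$; a user with demand $\Phi$ has per-slot demand $\phi(t)=w(t)\Phi$. The willingness to pay is $\gamma(t)=w(t)^{1-\theta}$ with price sensitivity $\theta\in(0,1)$. Offloading indicators: constants $\kappa_{\mathrm{avg}},\kappa_{\mathrm{peak}}\in(0,1]$ (independent of price). Delay profile and WiFi contact probabilities are homogeneous across users and time, so that every user's daily cellular (3G) traffic equals $\kappa_{\mathrm{avg}}$ times its total (3G+WiFi) traffic; and if $X_{\rm tot}(p)$ is the total traffic sent in the cell in a day at price $p$, the peak per-slot cellular traffic is $A(p)=\kappa_{\mathrm{peak}}X_{\rm tot}(p)$. Volume pricing with unit price $p>0$ per unit of cellular traffic: a user with demand $\Phi$ chooses $x(t)\in[0,\phi(t)]$ to maximize $\sum_{t}w(t)^{1-\theta}x(t)^\theta-p\,\kappa_{\mathrm{avg}}\sum_t x(t)$; its optimal choice is $x^\star_\Phi(t)=w(t)\min\{\Phi,(\theta/(p\kappa_{\mathrm{avg}}))^{1/(1-\theta)}\}$ (every user participates). Then $X_{\rm tot}(p)=\hat N\int_0^{\Phi_{\max}}\sum_t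 x^\star_\Phi(t)f_\Phi(\Phi)\,d\Phi$, and the provider's revenue with linear cellular cost coefficient $\eta>0$ is $R(p)=(p-\eta)\,\kappa_{\mathrm{avg}}X_{\rm tot}(p)$. Feasible price set: $\mathcal P=\{p: R(p)>0,\ A(p)\le C_{3g}\}$; threshold price $p_0=\inf\mathcal P$. An equilibrium price is any $p^\star\in\arg\max_{p\in\mathcal P}R(p)$. The network is saturated at $p$ if $A(p)=C_{3g}$; for a unique equilibrium price $p^\star$, the network is called opt-saturated if it is saturated at $p^\star$ and opt-unsaturated otherwise. *)

theory Defs
  imports "HOL-Analysis.Analysis"
begin

definition dens :: "real \<Rightarrow> real \<Rightarrow> real \<Rightarrow> real" where
  "dens \<sigma> Phimax x = x powr (- \<sigma>) / (Phimax powr (1 - \<sigma>) / (1 - \<sigma>))"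

text \<open>Unconstrained optimal daily volume (theta / (p kappa_avg))^(1/(1-theta)).\<close>
definition user_cap :: "real \<Rightarrow> real \<Rightarrow> real \<Rightarrow> real" where
  "user_cap \<theta> ka p = (\<theta> / (p * ka)) powr (1 / (1 - \<theta>))"

definition xstar :: "(nat \<Rightarrow> real) \<Rightarrow> real \<Rightarrow> real \<Rightarrow> real \<Rightarrow> real \<Rightarrow> nat \<Rightarrow> real" where
  "xstar w \<theta> ka p Phi t = w t * min Phi (user_cap \<theta> ka p)"

text \<open>Total (3G + WiFi) daily traffic in the cell at price p, time slots T = {1..nT}.\<close>
definition Xtot :: "real \<Rightarrow> real \<Rightarrow> real \<Rightarrow> nat \<Rightarrow> (nat \<Rightarrow> real) \<Rightarrow> real \<Rightarrow> real \<Rightarrow> real \<Rightarrow> real" where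
  "Xtot N Phimax \<sigma> nT w \<theta> ka p =
     N * integral {0..Phimax} (\<lambda>Phi. (\<Sum>t = 1..nT. xstar w \<theta> ka p Phi t) * dens \<sigma> Phimax Phi)"

end

theory Submission
  imports Defs
begin

text \<open>
  The traffic depends on the price p and on
  kappa_avg = k only through the effective price q = p * k: integrating the users' choices
  against the power-law demand density gives the closed form vol q = N * trunc_mean (demand q)
  (lemma traffic_eq).  The argument then has four steps.
  (1) The volume is decreasing, strictly beyond the price q_full at which users start to be
      capped, and the marginal revenue is R'(p) = k N cap(p k) * margin k p.
  (2) The margin is positive at low prices, negative at high prices and, in the capped regime,
      equals (1 - F) times a strictly decreasing Lerner gap; so R is unimodal with peak at the
      unique root p_opt of the margin.  Feasible prices form an up-closed ray.
  (3) If R'(p0) < 0, then p0 > p_opt, the capacity binds at p0, and p0 is the unique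
      equilibrium; as a function of kappa_peak, p0 inverts z \<mapsto> C / vol (z k), so it increases.
  (4) If R'(p0) > 0, then p_opt is strictly feasible and is the unique equilibrium; its effective
      price p_opt(k) k inverts the increasing map opt_kavg, so it increases with kappa_avg.
\<close>

text \<open>Fundamental theorem of calculus for a power with exponent a > -1;
  the antiderivative stays continuous at 0, so the interval may start there.\<close>
lemma powr_has_integral:
  fixes a b c :: real
  assumes a: "a > -1" and c: "0 \<le> c" "c \<le> b"
  shows "((\<lambda>x. x powr a) has_integral (b powr (a + 1) - c powr (a + 1)) / (a + 1)) {c..b}"
proof -
  have "((\<lambda>x. x powr a) has_integral
      ((\<lambda>x. x powr (a + 1) / (a + 1)) b - (\<lambda>x. x powr (a + 1) / (a + 1)) c)) {c..b}"
  proof (rule fundamental_theorem_of_calculus_interior)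
    show "continuous_on {c..b} (\<lambda>x. x powr (a + 1) / (a + 1))"
      using a c by (intro continuous_intros continuous_on_powr') auto
    fix x assume x: "x \<in> {c<..<b}"
    have "((\<lambda>x. x powr (a + 1) / (a + 1)) has_real_derivative
        ((a + 1) * x powr (a + 1 - 1) / (a + 1))) (at x)"
      using x c by (auto intro!: derivative_eq_intros)
    then show "((\<lambda>x. x powr (a + 1) / (a + 1)) has_vector_derivative x powr a) (at x)"
      using a by (simp add: has_real_derivative_iff_has_vector_derivative)
  qed (use c in auto)
  then show ?thesis by (simp add: diff_divide_distrib)
qed

lemma DERIV_zero_squeeze:
  fixes f g :: "real \<Rightarrow> real"
  assumes g: "DERIV g x :> 0"
    and dom: "\<And>y. \<bar>f y - f x\<bar> \<le> \<bar>g y - g x\<bar>"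
  shows "DERIV f x :> 0"
proof -
  have "((\<lambda>y. (g y - g x) / (y - x)) \<longlongrightarrow> 0) (at x)"
    using g by (simp add: has_field_derivative_iff)
  then have g': "((\<lambda>y. \<bar>(g y - g x) / (y - x)\<bar>) \<longlongrightarrow> 0) (at x)"
    by (rule tendsto_rabs_zero)
  have "eventually (\<lambda>y. norm ((f y - f x) / (y - x)) \<le> \<bar>(g y - g x) / (y - x)\<bar>) (at x)"
    using dom by (intro always_eventually allI) (simp add: abs_divide divide_right_mono)
  from Lim_null_comparison[OF this g'] show ?thesis
    by (simp add: has_field_derivative_iff)
qed

lemma isCont_eventually_less:
  fixes f :: "'a::t2_space \<Rightarrow> real"
  shows "isCont f x \<Longrightarrow> c < f x \<Longrightarrow> eventually (\<lambda>z. c < f z) (nhds x)"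
    and "isCont f x \<Longrightarrow> f x < c \<Longrightarrow> eventually (\<lambda>z. f z < c) (nhds x)"
  using order_tendstoD[of f "f x" "nhds x"] by (auto simp: isCont_def tendsto_at_iff_tendsto_nhds)

lemma Inf_sublevel_boundary:
  fixes g :: "real \<Rightarrow> real" and a c :: real
  defines "S \<equiv> {x. a < x \<and> g x \<le> c}"
  assumes cont: "\<And>x. a < x \<Longrightarrow> isCont g x" and ne: "S \<noteq> {}" and gt: "a < Inf S"
  shows "g (Inf S) = c"
proof -
  define x0 where "x0 = Inf S"
  have lower: "x0 \<le> x" if "x \<in> S" for x
    unfolding x0_def using that by (intro cInf_lower bdd_belowI[of _ a]) (auto simp: S_def)
  have cx: "isCont g x0" using cont gt by (simp add: x0_def)
  have "\<not> c < g x0"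
  proof
    assume "c < g x0"
    then obtain r where r: "r > 0" "\<And>z. dist z x0 < r \<Longrightarrow> c < g z"
      using isCont_eventually_less(1)[OF cx] unfolding eventually_nhds_metric by blast
    obtain x where "x \<in> S" "x < x0 + r" using cInf_lessD[OF ne, of "x0 + r"] r by (auto simp: x0_def)
    then show False using lower r(2)[of x] by (auto simp: S_def dist_real_def)
  qed
  moreover have "\<not> g x0 < c"
  proof
    assume "g x0 < c"
    then have "eventually (\<lambda>z. g z < c \<and> a < z) (nhds x0)"
      using isCont_eventually_less(2)[OF cx] isCont_eventually_less(1)[OF continuous_ident] gt
      by (auto simp: x0_def intro: eventually_conj)
    then obtain r where r: "r > 0" "\<And>z. dist z x0 < r \<Longrightarrow> g z < c \<and> a < z"
      unfolding eventually_nhds_metric by blast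
    then have "g (x0 - r / 2) < c \<and> a < x0 - r / 2" by (simp add: dist_real_def)
    then have "x0 - r / 2 \<in> S" by (simp add: S_def)
    then show False using lower[of "x0 - r / 2"] r(1) by simp
  qed
  ultimately show ?thesis by (simp add: x0_def)
qed

lemma DERIV_local_inverse:
  fixes f g :: "real \<Rightarrow> real"
  assumes der: "DERIV f x :> D" and D: "D > 0"
    and inv: "eventually (\<lambda>z. g (f z) = z) (nhds x)"
    and cont: "eventually (\<lambda>z. isCont f z) (nhds x)"
  shows "DERIV g (f x) :> inverse D"
proof -
  obtain d0 where d0: "d0 > 0" "\<And>z. dist z x \<le> d0 \<Longrightarrow> g (f z) = z \<and> isCont f z"
    using eventually_conj[OF inv cont] unfolding eventually_nhds_metric_le by blast
  obtain d1 where d1: "d1 > 0" "\<And>h. 0 < h \<Longrightarrow> h < d1 \<Longrightarrow> f x < f (x + h)"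
    using DERIV_pos_inc_right[OF der D] by blast
  obtain d2 where d2: "d2 > 0" "\<And>h. 0 < h \<Longrightarrow> h < d2 \<Longrightarrow> f (x - h) < f x"
    using DERIV_pos_inc_left[OF der D] by blast
  define d where "d = min d0 (min d1 d2) / 2"
  have d: "0 < d" "d \<le> d0" "d < d1" "d < d2" using d0 d1 d2 by (auto simp: d_def)
  have near: "g (f z) = z" "isCont f z" if "\<bar>z - x\<bar> \<le> d" for z
    using d0(2)[of z] that d by (auto simp: dist_real_def)
  have lo: "f (x - d) < f x" and hi: "f x < f (x + d)" using d1 d2 d by auto
  show ?thesis
  proof (rule DERIV_inverse_function[where a="f (x - d)" and b="f (x + d)"])
    show "DERIV f (g (f x)) :> D" using der near(1)[of x] d(1) by simp
    show "isCont g (f x)" by (rule isCont_inverse_function[OF d(1) near])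
    fix y assume y: "f (x - d) < y" "y < f (x + d)"
    obtain z where z: "x - d \<le> z" "z \<le> x + d" "f z = y"
      using IVT[of f "x - d" y "x + d"] y d near(2) by (force simp: abs_le_iff)
    then show "f (g y) = y" using near(1)[of z] by (simp add: abs_le_iff)
  qed (use D lo hi in auto)
qed

lemma DERIV_nonneg_if_right_mono:
  fixes f :: "real \<Rightarrow> real"
  assumes der: "DERIV f x :> D" and mono: "\<And>h. 0 < h \<Longrightarrow> f x \<le> f (x + h)"
  shows "0 \<le> D"
proof (rule ccontr)
  assume "\<not> 0 \<le> D"
  then obtain e where e: "e > 0" "\<And>h. 0 < h \<Longrightarrow> h < e \<Longrightarrow> f (x + h) < f x"
    using DERIV_neg_dec_right[OF der] by force
  then have "f (x + e / 2) < f x" by simp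
  then show False using mono[of "e / 2"] e(1) by simp
qed

section \<open>The mean of the demand truncated at a volume cap\<close>

text \<open>For demand with density dens s Pm (a power law on [0, Pm]) and a cap u, the mean
  truncated demand E[min(Phi, u)] has this closed form.\<close>
definition trunc_mean :: "real \<Rightarrow> real \<Rightarrow> real \<Rightarrow> real" where
  "trunc_mean s Pm u = min u Pm * (1 - (min u Pm / Pm) powr (1 - s) / (2 - s))"

text \<open>Splitting [0, Pm] at v = min u Pm, both pieces are power integrals.\<close>
lemma integral_trunc_demand:
  fixes s Pm u :: real
  assumes s: "0 < s" "s < 1" and Pm: "0 < Pm" and u: "0 < u"
  shows "integral {0..Pm} (\<lambda>x. min x u * dens s Pm x) = trunc_mean s Pm u"
proof -
  define v where "v = min u Pm"
  define Z where "Z = Pm powr (1 - s) / (1 - s)"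
  have v: "0 < v" "v \<le> Pm" "v \<le> u" using u Pm by (auto simp: v_def)
  have dens: "dens s Pm x = x powr (- s) / Z" for x by (simp add: dens_def Z_def)
  have low: "min x u * dens s Pm x = x powr (1 - s) / Z" if "x \<in> {0..v}" for x
    using that v powr_mult_base[of x "- s"] by (simp add: dens)
  have high: "min x u * dens s Pm x = v * x powr (- s) / Z" if "x \<in> {v..Pm}" for x
    using that v by (auto simp: dens v_def min_def)
  have "((\<lambda>x. x powr (1 - s) / Z) has_integral (v powr (2 - s) / (2 - s) / Z)) {0..v}"
    using powr_has_integral[of "1 - s" 0 v] s v by (intro has_integral_divide) (simp add: numeral_2_eq_2)
  then have i1: "((\<lambda>x. min x u * dens s Pm x) has_integral (v powr (2 - s) / (2 - s) / Z)) {0..v}"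
    by (rule has_integral_eq[rotated]) (simp add: low)
  have "((\<lambda>x. v * x powr (- s) / Z) has_integral
      (v * ((Pm powr (1 - s) - v powr (1 - s)) / (1 - s)) / Z)) {v..Pm}"
    using powr_has_integral[of "- s" v Pm] s v
    by (intro has_integral_divide has_integral_mult_right) simp
  then have i2: "((\<lambda>x. min x u * dens s Pm x) has_integral
      (v * ((Pm powr (1 - s) - v powr (1 - s)) / (1 - s)) / Z)) {v..Pm}"
    by (rule has_integral_eq[rotated]) (simp add: high)
  have "integral {0..Pm} (\<lambda>x. min x u * dens s Pm x)
      = v powr (2 - s) / (2 - s) / Z + v * ((Pm powr (1 - s) - v powr (1 - s)) / (1 - s)) / Z"
    using has_integral_combine[OF _ _ i1 i2] v by (simp add: integral_unique)
  also have "\<dots> = v * (1 - (v powr (1 - s) / Pm powr (1 - s)) / (2 - s))"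
  proof -
    define A where "A = v powr (1 - s)"
    define M where "M = Pm powr (1 - s)"
    have v2: "v powr (2 - s) = v * A"
      using powr_mult_base[of v "1 - s"] v by (simp add: A_def)
    have nz: "M \<noteq> 0" "2 - s \<noteq> 0" "1 - s \<noteq> 0" using Pm s by (auto simp: M_def)
    have "v * A / (2 - s) / (M / (1 - s)) = v * A / M - v * A / M / (2 - s)"
      using nz by (simp add: field_simps)
    moreover have "v * ((M - A) / (1 - s)) / (M / (1 - s)) = v - v * A / M"
      using nz by (simp add: field_simps)
    ultimately show ?thesis
      unfolding Z_def v2 A_def[symmetric] M_def[symmetric] by (simp add: algebra_simps)
  qed
  finally show ?thesis using v Pm by (simp add: trunc_mean_def v_def powr_divide)
qed

lemma uncapped_mean_deriv:
  fixes s Pm v :: real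
  assumes s: "0 < s" "s < 1" and Pm: "0 < Pm" and v: "0 < v"
  shows "DERIV (\<lambda>v. v * (1 - (v / Pm) powr (1 - s) / (2 - s))) v :> 1 - (v / Pm) powr (1 - s)"
proof -
  define r where "r = (v / Pm) powr (1 - s)"
  have d: "DERIV (\<lambda>v. v * (1 - (v / Pm) powr (1 - s) / (2 - s))) v :>
      (1 - r / (2 - s)) + v * (- ((1 - s) * (v / Pm) powr (1 - s - 1) * (1 / Pm)) / (2 - s))"
    unfolding r_def using v Pm s by (auto intro!: derivative_eq_intros)
  have "v * ((v / Pm) powr (1 - s - 1) * (1 / Pm)) = (v / Pm) * (v / Pm) powr (- s)"
    by simp
  also have "\<dots> = r" using v Pm powr_mult_base[of "v / Pm" "- s"] by (simp add: r_def)
  finally have vr: "v * ((v / Pm) powr (1 - s - 1) * (1 / Pm)) = r" .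
  have "(1 - r / (2 - s)) + v * (- ((1 - s) * (v / Pm) powr (1 - s - 1) * (1 / Pm)) / (2 - s))
      = 1 - r / (2 - s) - (1 - s) * (v * ((v / Pm) powr (1 - s - 1) * (1 / Pm))) / (2 - s)"
    by (simp add: field_simps)
  also have "\<dots> = 1 - (r + (1 - s) * r) / (2 - s)"
    unfolding vr by (simp add: add_divide_distrib)
  also have "r + (1 - s) * r = (2 - s) * r" by (simp add: algebra_simps)
  also have "1 - (2 - s) * r / (2 - s) = 1 - r" using s by simp
  finally show ?thesis using DERIV_cong[OF d] by (simp only: r_def)
qed

text \<open>The marginal truncated mean is the tail probability P(Phi > v); at the kink v = Pm
  both one-sided slopes vanish.\<close>
lemma trunc_mean_deriv:
  fixes s Pm v :: real
  assumes s: "0 < s" "s < 1" and Pm: "0 < Pm" and v: "0 < v"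
  shows "DERIV (trunc_mean s Pm) v :> 1 - (min v Pm / Pm) powr (1 - s)"
proof -
  define g where "g v = v * (1 - (v / Pm) powr (1 - s) / (2 - s))" for v
  have g': "DERIV g v :> 1 - (v / Pm) powr (1 - s)"
    unfolding g_def[abs_def] by (rule uncapped_mean_deriv[OF s Pm v])
  consider "v < Pm" | "v > Pm" | "v = Pm" by linarith
  then show ?thesis
  proof cases
    case 1
    have "DERIV (trunc_mean s Pm) v :> 1 - (v / Pm) powr (1 - s)"
      by (rule has_field_derivative_transform_within_open[OF g', where S="{..<Pm}"])
         (use 1 in \<open>auto simp: trunc_mean_def g_def\<close>)
    then show ?thesis using 1 by simp
  next
    case 2
    have "DERIV (trunc_mean s Pm) v :> 0"
      by (rule has_field_derivative_transform_within_open
            [OF DERIV_const[of "trunc_mean s Pm Pm"], where S="{Pm<..}"])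
         (use 2 in \<open>simp_all add: trunc_mean_def min_absorb2\<close>)
    moreover have "min v Pm = Pm" using 2 by simp
    then have "1 - (min v Pm / Pm) powr (1 - s) = 0" using Pm by simp
    ultimately show ?thesis by simp
  next
    case 3
    have capped: "trunc_mean s Pm y = g (min y Pm)" for y
      by (simp add: trunc_mean_def g_def)
    have dom: "\<bar>trunc_mean s Pm y - trunc_mean s Pm Pm\<bar> \<le> \<bar>g y - g Pm\<bar>" for y
      unfolding capped by (cases "y \<le> Pm") (simp_all add: min_absorb1 min_absorb2)
    have "DERIV g Pm :> 0" using g' 3 Pm by simp
    from DERIV_zero_squeeze[OF this dom] have "DERIV (trunc_mean s Pm) Pm :> 0" .
    then show ?thesis using 3 Pm by simp
  qed
qed

text \<open>At the effective unit
  price q = p * kappa_avg a user wishes to send demand q = (th/q)^bet, bet = 1/(1-th), and sends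
  min(Phi, demand q).  All traffic quantities depend on p and kappa_avg only through q.\<close>
locale demand_model =
  fixes N Pm s th :: real
  assumes N_pos: "N > 0" and Pm_pos: "Pm > 0" and s_bounds: "0 < s" "s < 1"
    and th_bounds: "0 < th" "th < 1"
begin

definition bet :: real where "bet = 1 / (1 - th)"
definition demand :: "real \<Rightarrow> real" where "demand q = (th / q) powr bet"

text \<open>The effective price at which the desired volume equals the maximal demand Pm.\<close>
definition q_full :: real where "q_full = th / Pm powr (1 - th)"

text \<open>The cap actually binding, and the share F(cap) = (cap/Pm)^(1-s) of users whose whole
  demand is served.\<close>
definition cap :: "real \<Rightarrow> real" where "cap q = min (demand q) Pm"
definition served :: "real \<Rightarrow> real" where "served q = (cap q / Pm) powr (1 - s)"

definition vol :: "real \<Rightarrow> real" where "vol q = N * trunc_mean s Pm (demand q)"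
definition dvol :: "real \<Rightarrow> real" where "dvol q = - N * bet * (1 - served q) * cap q / q"

lemma bet_gt1: "bet > 1"
  using th_bounds by (simp add: bet_def)

lemma demand_pos: "q > 0 \<Longrightarrow> demand q > 0"
  using th_bounds by (simp add: demand_def)

lemma demand_inverse: assumes "e > 0" shows "demand (th / e powr (1 - th)) = e"
proof -
  have "demand (th / e powr (1 - th)) = (e powr (1 - th)) powr bet"
    using th_bounds assms by (simp add: demand_def)
  also have "\<dots> = e" using th_bounds assms by (simp add: powr_powr bet_def)
  finally show ?thesis .
qed

lemma demand_strict_antimono: "0 < q \<Longrightarrow> q < q' \<Longrightarrow> demand q' < demand q"
  unfolding demand_def using th_bounds bet_gt1
  by (intro powr_less_mono2) (auto intro!: divide_strict_left_mono)

lemma demand_antimono: "0 < q \<Longrightarrow> q \<le> q' \<Longrightarrow> demand q' \<le> demand q"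
  using demand_strict_antimono by (cases "q = q'") (auto simp: less_le)

lemma q_full_pos: "q_full > 0"
  using th_bounds Pm_pos by (simp add: q_full_def)

lemma demand_lt_Pm_iff: "q > 0 \<Longrightarrow> demand q < Pm \<longleftrightarrow> q > q_full"
  using demand_strict_antimono[of q q_full] demand_strict_antimono[of q_full q]
    demand_inverse[OF Pm_pos] q_full_pos
  by (cases q q_full rule: linorder_cases) (auto simp: q_full_def)

lemma demand_deriv: assumes "q > 0" shows "DERIV demand q :> - bet * demand q / q"
proof -
  have "DERIV demand q :> bet * (th / q) powr (bet - 1) * (- (th / q^2))"
    unfolding demand_def using assms th_bounds
    by (auto intro!: derivative_eq_intros simp: power2_eq_square field_simps)
  moreover have "(th / q) powr (bet - 1) * (th / q) = (th / q) powr bet"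
    using assms th_bounds by (simp add: powr_diff)
  then have "bet * (th / q) powr (bet - 1) * (- (th / q^2)) = - bet * demand q / q"
    unfolding demand_def using assms by (simp add: power2_eq_square field_simps)
  ultimately show ?thesis by simp
qed

lemma cap_pos: "q > 0 \<Longrightarrow> cap q > 0"
  using demand_pos Pm_pos by (simp add: cap_def)

lemma cap_small: assumes "e > 0" "th / e powr (1 - th) \<le> q" shows "cap q \<le> e"
proof -
  have "th / e powr (1 - th) > 0" using th_bounds assms(1) by simp
  then have "demand q \<le> e" using demand_antimono[OF _ assms(2)] demand_inverse[OF assms(1)] by simp
  then show ?thesis by (simp add: cap_def)
qed

lemma served_pos: assumes "q > 0" shows "served q > 0"
  using cap_pos[OF assms] Pm_pos by (simp add: served_def)

lemma served_le1: "q > 0 \<Longrightarrow> served q \<le> 1"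
  unfolding served_def using cap_pos[of q] Pm_pos s_bounds by (intro powr_le1) (auto simp: cap_def)

lemma served_eq1: "0 < q \<Longrightarrow> q \<le> q_full \<Longrightarrow> served q = 1"
  using demand_lt_Pm_iff[of q] Pm_pos by (simp add: served_def cap_def)

lemma served_lt1: assumes "q > q_full" shows "served q < 1"
proof -
  have q: "q > 0" using assms q_full_pos by simp
  have "cap q / Pm < 1" using demand_lt_Pm_iff[OF q] assms Pm_pos by (simp add: cap_def)
  then have "(cap q / Pm) powr (1 - s) < 1 powr (1 - s)"
    using s_bounds cap_pos[OF q] Pm_pos by (intro powr_less_mono2) auto
  then show ?thesis by (simp add: served_def)
qed

lemma served_antimono: "0 < q \<Longrightarrow> q \<le> q' \<Longrightarrow> served q' \<le> served q"
  unfolding served_def cap_def using demand_antimono[of q q'] demand_pos[of q'] Pm_pos s_bounds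
  by (intro powr_mono2) (auto intro!: divide_right_mono)

lemma served_small: assumes d: "d > 0" shows "\<exists>q0>0. \<forall>q\<ge>q0. served q \<le> d"
proof -
  define e where "e = Pm * d powr (1 / (1 - s))"
  have e: "e > 0" using Pm_pos d by (simp add: e_def)
  show ?thesis
  proof (intro exI conjI allI impI)
    show "th / e powr (1 - th) > 0" using th_bounds e by simp
    fix q assume q: "th / e powr (1 - th) \<le> q"
    then have "q > 0" using \<open>th / e powr (1 - th) > 0\<close> by linarith
    have "cap q / Pm \<le> e / Pm" using cap_small[OF e q] Pm_pos by (simp add: divide_right_mono)
    then have "served q \<le> (e / Pm) powr (1 - s)"
      unfolding served_def using s_bounds Pm_pos cap_pos[OF \<open>q > 0\<close>] by (intro powr_mono2) auto
    also have "e / Pm = d powr (1 / (1 - s))" using Pm_pos by (simp add: e_def)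
    also have "(d powr (1 / (1 - s))) powr (1 - s) = d"
      using s_bounds d by (simp add: powr_powr)
    finally show "served q \<le> d" .
  qed
qed

lemma vol_eq: "vol q = N * cap q * (1 - served q / (2 - s))"
  by (simp add: vol_def trunc_mean_def cap_def served_def min.commute)

lemma vol_pos: assumes "q > 0" shows "vol q > 0"
proof -
  have "served q / (2 - s) < 1" using served_le1[OF assms] s_bounds by (simp add: divide_less_eq)
  then show ?thesis unfolding vol_eq using N_pos cap_pos[OF assms] by simp
qed

lemma vol_le: "q > 0 \<Longrightarrow> vol q \<le> N * cap q"
  using served_pos[of q] cap_pos[of q] N_pos s_bounds by (simp add: vol_eq mult_left_le)

lemma vol_small: assumes e: "e > 0" shows "\<exists>q>0. vol q \<le> e"
proof -
  define q where "q = th / (e / N) powr (1 - th)"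
  have q: "q > 0" using th_bounds e N_pos by (simp add: q_def)
  have "cap q \<le> e / N" using cap_small[of "e / N" q] e N_pos by (simp add: q_def)
  then have "cap q * N \<le> e" using N_pos by (simp add: pos_le_divide_eq)
  then have "vol q \<le> e" using vol_le[OF q] by (metis mult.commute order_trans)
  then show ?thesis using q by blast
qed

lemma vol_deriv: assumes q: "q > 0" shows "DERIV vol q :> dvol q"
proof -
  have "DERIV (\<lambda>q. N * trunc_mean s Pm (demand q)) q :>
      N * ((1 - (min (demand q) Pm / Pm) powr (1 - s)) * (- bet * demand q / q))"
    by (intro DERIV_cmult DERIV_chain2[OF trunc_mean_deriv demand_deriv])
       (use s_bounds Pm_pos demand_pos q in auto)
  moreover have "N * ((1 - (min (demand q) Pm / Pm) powr (1 - s)) * (- bet * demand q / q)) = dvol q"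
    by (cases "demand q < Pm") (use Pm_pos in \<open>simp_all add: dvol_def served_def cap_def\<close>)
  ultimately show ?thesis by (simp add: vol_def[abs_def])
qed

lemma vol_isCont: "q > 0 \<Longrightarrow> isCont vol q"
  using vol_deriv DERIV_isCont by blast

lemma dvol_nonpos: "q > 0 \<Longrightarrow> dvol q \<le> 0"
  using served_le1[of q] cap_pos[of q] bet_gt1 N_pos by (simp add: dvol_def field_simps)

lemma dvol_neg: assumes "q > q_full" shows "dvol q < 0"
proof -
  have q: "q > 0" using assms q_full_pos by simp
  show ?thesis
    using served_lt1[OF assms] cap_pos[OF q] bet_gt1 N_pos q by (simp add: dvol_def field_simps)
qed

lemma vol_antimono: assumes "0 < q" "q \<le> q'" shows "vol q' \<le> vol q"
proof (rule DERIV_nonpos_imp_nonincreasing[OF assms(2)])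
  fix x assume "q \<le> x" "x \<le> q'"
  then have "x > 0" using assms by simp
  then show "\<exists>y. DERIV vol x :> y \<and> y \<le> 0" using vol_deriv dvol_nonpos by blast
qed

lemma vol_strict_antimono:
  assumes "0 < q" "q < q'" "q_full < q'" shows "vol q' < vol q"
proof -
  define c where "c = max q q_full"
  have c: "0 < c" "q \<le> c" "c < q'" using assms q_full_pos by (auto simp: c_def)
  have "vol q' < vol c"
  proof (rule DERIV_neg_imp_decreasing_open[OF c(3)])
    fix x assume "c < x" "x < q'"
    then have "x > q_full" "x > 0" using c by (auto simp: c_def)
    then show "\<exists>y. DERIV vol x :> y \<and> y < 0" using vol_deriv dvol_neg by blast
  next
    show "continuous_on {c..q'} vol"
      using c by (intro continuous_at_imp_continuous_on) (auto intro!: vol_isCont)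
  qed
  also have "vol c \<le> vol q" using vol_antimono[of q c] c assms by simp
  finally show ?thesis .
qed

lemma served_isCont: assumes "q > 0" shows "isCont served q"
proof -
  have "isCont demand q" using demand_deriv[OF assms] DERIV_isCont by blast
  then have "isCont (\<lambda>q. (min (demand q) Pm / Pm) powr (1 - s)) q"
    using demand_pos[OF assms] Pm_pos by (intro continuous_intros) auto
  then show ?thesis by (simp add: served_def[abs_def] cap_def[abs_def])
qed

text \<open>Beyond q_full the cap is the smooth desired volume, so served is differentiable there.\<close>
lemma served_differentiable: assumes q: "q > q_full" shows "served differentiable (at q)"
proof -
  have q0: "q > 0" using q q_full_pos by simp
  have "DERIV (\<lambda>q. demand q / Pm) q :> (- bet * demand q / q) / Pm"
    using demand_deriv[OF q0] by (rule DERIV_cdivide)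
  then have "DERIV (\<lambda>q. (demand q / Pm) powr (1 - s)) q :>
      (1 - s) * (demand q / Pm) powr (1 - s - of_nat 1) * ((- bet * demand q / q) / Pm)"
    by (rule DERIV_fun_powr) (use demand_pos[OF q0] Pm_pos in simp)
  then have "DERIV served q :>
      (1 - s) * (demand q / Pm) powr (1 - s - of_nat 1) * ((- bet * demand q / q) / Pm)"
  proof (rule has_field_derivative_transform_within_open[where S="{q_full<..}"])
    fix z :: real assume "z \<in> {q_full<..}"
    then have "demand z < Pm" using demand_lt_Pm_iff[of z] q_full_pos by simp
    then show "(demand z / Pm) powr (1 - s) = served z" by (simp add: served_def cap_def)
  qed (use q in auto)
  then show ?thesis by (auto simp: real_differentiable_def)
qed

text \<open>elast_ratio (served q) / bet is the reciprocal of the price elasticity of the volume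
  when q > q_full, as vol_eq and dvol show; it grows with the served share.\<close>
definition elast_ratio :: "real \<Rightarrow> real" where
  "elast_ratio x = 1 / (2 - s) + (1 - 1 / (2 - s)) / (1 - x)"

lemma elast_ratio_mono: assumes "0 \<le> x" "x \<le> y" "y < 1" shows "elast_ratio x \<le> elast_ratio y"
proof -
  have "1 - 1 / (2 - s) \<ge> 0" using s_bounds by (simp add: divide_le_eq)
  moreover have "0 < 1 - y" "1 - y \<le> 1 - x" using assms by auto
  ultimately have "(1 - 1 / (2 - s)) / (1 - x) \<le> (1 - 1 / (2 - s)) / (1 - y)"
    by (intro divide_left_mono) auto
  then show ?thesis by (simp add: elast_ratio_def)
qed

lemma elast_ratio_differentiable: "x < 1 \<Longrightarrow> elast_ratio differentiable (at x)"
  unfolding elast_ratio_def[abs_def] by (intro derivative_intros) auto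

end

text \<open>The definitions below are verbatim those of
  the theorem; k stands for kappa_avg and k' for kappa_peak.\<close>
locale cell_market = demand_model +
  fixes eta C :: real and nT :: nat and w :: "nat \<Rightarrow> real"
  assumes eta_pos: "eta > 0" and C_pos: "C > 0" and w_sum: "(\<Sum>t = 1..nT. w t) = 1"
begin

definition traffic :: "real \<Rightarrow> real \<Rightarrow> real" where
  "traffic k p = Xtot N Pm s nT w th k p"
definition revenue :: "real \<Rightarrow> real \<Rightarrow> real" where
  "revenue k p = (p - eta) * k * traffic k p"
definition peak :: "real \<Rightarrow> real \<Rightarrow> real \<Rightarrow> real" where
  "peak k k' p = k' * traffic k p"
definition feasible :: "real \<Rightarrow> real \<Rightarrow> real set" where
  "feasible k k' = {p. 0 < p \<and> revenue k p > 0 \<and> peak k k' p \<le> C}"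
definition threshold :: "real \<Rightarrow> real \<Rightarrow> real" where
  "threshold k k' = Inf (feasible k k')"
definition is_equilibrium :: "real \<Rightarrow> real \<Rightarrow> real \<Rightarrow> bool" where
  "is_equilibrium k k' p \<longleftrightarrow> p \<in> feasible k k' \<and> (\<forall>q\<in>feasible k k'. revenue k q \<le> revenue k p)"
definition equilibrium :: "real \<Rightarrow> real \<Rightarrow> real" where
  "equilibrium k k' = (THE p. is_equilibrium k k' p)"

text \<open>Since the weights sum to one, the daily traffic is the truncated-mean volume at the
  effective price p * k.\<close>
lemma traffic_eq: assumes k: "k > 0" and p: "p > 0" shows "traffic k p = vol (p * k)"
proof -
  have cap: "user_cap th k p = demand (p * k)" by (simp add: user_cap_def demand_def bet_def)
  have "(\<Sum>t = 1..nT. xstar w th k p x t) = min x (demand (p * k))" for x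
    using w_sum by (simp add: xstar_def cap sum_distrib_right[symmetric])
  then have "traffic k p = N * integral {0..Pm} (\<lambda>x. min x (demand (p * k)) * dens s Pm x)"
    by (simp add: traffic_def Xtot_def)
  also have "\<dots> = vol (p * k)"
    using integral_trunc_demand[OF s_bounds Pm_pos demand_pos] k p by (simp add: vol_def)
  finally show ?thesis .
qed

lemma revenue_eq: "k > 0 \<Longrightarrow> p > 0 \<Longrightarrow> revenue k p = (p - eta) * k * vol (p * k)"
  by (simp add: revenue_def traffic_eq)

lemma vol_scaled_deriv: assumes k: "k > 0" and p: "p > 0"
  shows "DERIV (\<lambda>p. vol (p * k)) p :> dvol (p * k) * k"
proof -
  have "DERIV (\<lambda>p. p * k) p :> k" by (auto intro!: derivative_eq_intros)
  moreover have "DERIV vol (p * k) :> dvol (p * k)" using vol_deriv k p by simp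
  ultimately show ?thesis by (rule DERIV_chain')
qed

lemma vol_scaled_isCont: "k > 0 \<Longrightarrow> p > 0 \<Longrightarrow> isCont (\<lambda>p. vol (p * k)) p"
  using vol_scaled_deriv DERIV_isCont by blast

text \<open>The factor deciding the sign of the marginal revenue: 1 - F/(2-s) - bet (1-F) (1-eta/p)
  with F the served share at the effective price p * k.\<close>
definition margin :: "real \<Rightarrow> real \<Rightarrow> real" where
  "margin k p = 1 - served (p * k) / (2 - s) - bet * (1 - served (p * k)) * (1 - eta / p)"

lemma revenue_deriv: assumes k: "k > 0" and p: "p > 0"
  shows "DERIV (revenue k) p :> k * N * cap (p * k) * margin k p"
proof -
  define F where "F = served (p * k)"
  define m where "m = cap (p * k)"
  have "DERIV (\<lambda>p. (p - eta) * k * vol (p * k)) p :>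
      1 * k * vol (p * k) + (p - eta) * k * (dvol (p * k) * k)"
    by (rule derivative_eq_intros refl vol_scaled_deriv[OF k p] | simp)+
  moreover have "1 * k * vol (p * k) + (p - eta) * k * (dvol (p * k) * k) = k * N * m * margin k p"
  proof -
    have V: "1 * k * vol (p * k) = k * N * m * (1 - F / (2 - s))"
      by (simp add: vol_eq F_def m_def)
    have dV: "(p - eta) * k * (dvol (p * k) * k) = - k * N * m * (bet * (1 - F) * (1 - eta / p))"
      using k p by (simp add: dvol_def F_def m_def field_simps)
    have M: "margin k p = 1 - F / (2 - s) - bet * (1 - F) * (1 - eta / p)"
      by (simp add: margin_def F_def)
    show ?thesis unfolding V dV M by (simp add: algebra_simps)
  qed
  ultimately have "DERIV (\<lambda>p. (p - eta) * k * vol (p * k)) p :> k * N * m * margin k p"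
    by simp
  then show ?thesis unfolding m_def
    by (rule has_field_derivative_transform_within_open[where S="{0<..}"])
       (use p revenue_eq[OF k] in auto)
qed

lemma revenue_isCont: "k > 0 \<Longrightarrow> p > 0 \<Longrightarrow> isCont (revenue k) p"
  using revenue_deriv DERIV_isCont by blast

lemma margin_isCont: assumes "k > 0" "p > 0" shows "isCont (margin k) p"
proof -
  have "isCont (\<lambda>p. served (p * k)) p"
    using assms by (intro continuous_intros isCont_o2[OF _ served_isCont]) auto
  then show ?thesis
    unfolding margin_def[abs_def] using assms s_bounds by (intro continuous_intros) auto
qed

lemma margin_pos_low: assumes k: "k > 0" and p: "p > 0" and low: "p \<le> eta \<or> p * k \<le> q_full"
  shows "margin k p > 0"
proof -
  have F: "0 < served (p * k)" "served (p * k) \<le> 1" using served_pos served_le1 k p by auto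
  have small: "served (p * k) / (2 - s) < 1" using F s_bounds by (simp add: divide_less_eq)
  show ?thesis
  proof (cases "p \<le> eta")
    case True
    then have "1 - eta / p \<le> 0" using p by (simp add: divide_le_eq)
    then have "bet * (1 - served (p * k)) * (1 - eta / p) \<le> 0"
      using bet_gt1 F by (intro mult_nonneg_nonpos) auto
    then show ?thesis using small by (simp add: margin_def)
  next
    case False
    then have "served (p * k) = 1" using low served_eq1 k p by simp
    then show ?thesis using s_bounds by (simp add: margin_def)
  qed
qed

text \<open>Once users are capped, margin = (1 - F) (elast_ratio F - bet (1 - eta/p)): revenue is
  maximal where the Lerner index 1 - eta/p equals the reciprocal elasticity.\<close>
definition lerner_gap :: "real \<Rightarrow> real \<Rightarrow> real" where
  "lerner_gap k p = elast_ratio (served (p * k)) - bet * (1 - eta / p)"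

lemma margin_factor: assumes "q_full < p * k"
  shows "margin k p = (1 - served (p * k)) * lerner_gap k p" "1 - served (p * k) > 0"
proof -
  define F where "F = served (p * k)"
  have F1: "1 - F \<noteq> 0" using served_lt1[OF assms] by (simp add: F_def)
  have "(1 - F) * elast_ratio F = (1 - F) / (2 - s) + (1 - 1 / (2 - s))"
    using F1 by (simp add: elast_ratio_def distrib_left)
  also have "\<dots> = 1 - F / (2 - s)" by (simp add: diff_divide_distrib)
  finally have EF: "(1 - F) * elast_ratio F = 1 - F / (2 - s)" .
  define x where "x = 1 - eta / p"
  have "(1 - F) * (elast_ratio F - bet * x) = (1 - F) * elast_ratio F - bet * (1 - F) * x"
    by (simp add: algebra_simps)
  then have "(1 - F) * (elast_ratio F - bet * x) = 1 - F / (2 - s) - bet * (1 - F) * x"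
    unfolding EF .
  then show "margin k p = (1 - served (p * k)) * lerner_gap k p"
    by (simp add: margin_def lerner_gap_def F_def x_def)
  show "1 - served (p * k) > 0" using served_lt1[OF assms] by simp
qed

text \<open>Both the served share and the price push the gap down: it is strictly decreasing.\<close>
lemma lerner_gap_strict_antimono: assumes k: "k > 0" and cap: "q_full < p * k" and pp: "p < p'"
  shows "lerner_gap k p' < lerner_gap k p"
proof -
  have pk: "p * k > 0" using cap q_full_pos by linarith
  then have p: "p > 0" using k by (simp add: zero_less_mult_iff)
  have pk': "p * k \<le> p' * k" using pp k by simp
  have "elast_ratio (served (p' * k)) \<le> elast_ratio (served (p * k))"
    using served_antimono[OF pk pk'] served_lt1[OF cap] served_pos[of "p' * k"] pk pk'
    by (intro elast_ratio_mono) auto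
  moreover have "eta / p' < eta / p" using eta_pos p pp by (simp add: divide_strict_left_mono)
  then have "bet * (1 - eta / p) < bet * (1 - eta / p')" using bet_gt1 by simp
  ultimately show ?thesis by (simp add: lerner_gap_def)
qed

text \<open>At high prices almost nobody is fully served and the cost is negligible, so the margin
  tends to 1 - bet < 0.\<close>
lemma margin_neg_unbounded: assumes k: "k > 0" shows "\<exists>p>a. margin k p < 0"
proof -
  define d where "d = th / 4"
  have d: "0 < d" "d < 1" using th_bounds by (auto simp: d_def)
  obtain q0 where q0: "q0 > 0" "\<And>q. q0 \<le> q \<Longrightarrow> served q \<le> d"
    using served_small[OF d(1)] by blast
  define p where "p = max (max a (eta / d)) (q0 / k) + 1"
  have p: "p > a" "p > eta / d" "p * k > q0"
    using k by (auto simp: p_def pos_divide_less_eq[symmetric])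
  moreover have "eta / d > 0" using eta_pos d by simp
  ultimately have p0: "p > 0" by linarith
  define F where "F = served (p * k)"
  have F: "0 \<le> F" "F \<le> d" using q0(2)[of "p * k"] served_pos[of "p * k"] p p0 k by (auto simp: F_def)
  have e: "eta / p < d" using p p0 d by (simp add: divide_less_eq mult.commute)
  have "(1 - d) * (1 - d) \<le> (1 - F) * (1 - eta / p)"
    using F e d by (intro mult_mono) auto
  moreover have "1 - 2 * d \<le> (1 - d) * (1 - d)" by (simp add: algebra_simps)
  ultimately have "bet * (1 - 2 * d) \<le> bet * ((1 - F) * (1 - eta / p))"
    using bet_gt1 by (intro mult_left_mono) auto
  moreover have "bet * (1 - 2 * d) > 1"
    using th_bounds by (simp add: bet_def d_def field_simps)
  moreover have "F / (2 - s) \<ge> 0" using F s_bounds by simp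
  moreover have "margin k p = 1 - F / (2 - s) - bet * ((1 - F) * (1 - eta / p))"
    by (simp add: margin_def F_def)
  ultimately show ?thesis using p by (intro exI[of _ p]) linarith
qed

lemma margin_sign: assumes k: "k > 0"
  shows "\<exists>ph. ph > eta \<and> ph * k > q_full \<and> margin k ph = 0
    \<and> (\<forall>p. 0 < p \<and> p < ph \<longrightarrow> margin k p > 0) \<and> (\<forall>p. ph < p \<longrightarrow> margin k p < 0)"
proof -
  define pa where "pa = max eta (q_full / k)"
  have pa: "pa > 0" "eta \<le> pa" "q_full / k \<le> pa" using eta_pos by (auto simp: pa_def)
  have low: "p \<le> eta \<or> p * k \<le> q_full" if "p \<le> pa" for p
    using that k by (cases "eta \<le> q_full / k") (auto simp: pa_def max_def pos_le_divide_eq)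
  have Ma: "margin k pa > 0" using margin_pos_low[OF k pa(1) low] by simp
  obtain pb where pb: "pb > pa" "margin k pb < 0" using margin_neg_unbounded[OF k] by blast
  obtain ph where ph: "pa \<le> ph" "ph \<le> pb" "margin k ph = 0"
    using IVT2[of "margin k" pb 0 pa] Ma pb pa margin_isCont[OF k] by force
  have ph_pa: "ph > pa" using ph Ma by (cases "ph = pa") auto
  then have "q_full / k < ph" using pa(3) by linarith
  then have phk: "ph * k > q_full" using k by (simp add: pos_divide_less_eq)
  have gap0: "lerner_gap k ph = 0" using margin_factor[OF phk] ph(3) by simp
  show ?thesis
  proof (intro exI conjI allI impI)
    show "ph > eta" "ph * k > q_full" "margin k ph = 0" using ph_pa pa phk ph(3) by auto
  next
    fix p assume p: "0 < p \<and> p < ph"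
    show "margin k p > 0"
    proof (cases "p \<le> pa")
      case True then show ?thesis using margin_pos_low[OF k _ low] p by blast
    next
      case False
      then have "q_full / k < p" using pa(3) by linarith
      then have pk: "p * k > q_full" using k by (simp add: pos_divide_less_eq)
      have "lerner_gap k ph < lerner_gap k p" using lerner_gap_strict_antimono[OF k pk] p by simp
      then show ?thesis using margin_factor[OF pk] gap0 by simp
    qed
  next
    fix p assume p: "ph < p"
    have pk: "p * k > q_full" using p phk k by (meson less_trans mult_strict_right_mono)
    have "lerner_gap k p < lerner_gap k ph" using lerner_gap_strict_antimono[OF k phk] p by simp
    then show "margin k p < 0" using margin_factor[OF pk] gap0 by (simp add: mult_pos_neg)
  qed
qed

definition p_opt :: "real \<Rightarrow> real" where "p_opt k = (THE p. 0 < p \<and> margin k p = 0)"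

lemma p_opt_root: assumes k: "k > 0"
  shows "p_opt k > eta" "p_opt k * k > q_full" "margin k (p_opt k) = 0"
    and "\<And>p. 0 < p \<Longrightarrow> p < p_opt k \<Longrightarrow> margin k p > 0"
    and "\<And>p. p_opt k < p \<Longrightarrow> margin k p < 0"
proof -
  obtain ph where ph: "ph > eta" "ph * k > q_full" "margin k ph = 0"
    and below: "\<And>p. 0 < p \<Longrightarrow> p < ph \<Longrightarrow> margin k p > 0"
    and above: "\<And>p. ph < p \<Longrightarrow> margin k p < 0"
    using margin_sign[OF k] by blast
  have "p_opt k = ph" unfolding p_opt_def
  proof (rule the_equality)
    show "0 < ph \<and> margin k ph = 0" using ph eta_pos by simp
    fix p assume "0 < p \<and> margin k p = 0"
    then show "p = ph" using below[of p] above[of p] by (cases p ph rule: linorder_cases) auto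
  qed
  then show "p_opt k > eta" "p_opt k * k > q_full" "margin k (p_opt k) = 0"
    "\<And>p. 0 < p \<Longrightarrow> p < p_opt k \<Longrightarrow> margin k p > 0" "\<And>p. p_opt k < p \<Longrightarrow> margin k p < 0"
    using ph below above by auto
qed

lemma margin_zero_iff: assumes k: "k > 0" and p: "p > 0" shows "margin k p = 0 \<longleftrightarrow> p = p_opt k"
  using p_opt_root[OF k] p by (cases p "p_opt k" rule: linorder_cases) force+

lemma deriv_revenue: "k > 0 \<Longrightarrow> p > 0 \<Longrightarrow> deriv (revenue k) p = k * N * cap (p * k) * margin k p"
  using revenue_deriv DERIV_imp_deriv by blast

lemma deriv_revenue_sgn: assumes k: "k > 0" and p: "p > 0"
  shows "sgn (deriv (revenue k) p) = sgn (p_opt k - p)"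
proof -
  have "sgn (k * N * cap (p * k)) = 1" using k p N_pos cap_pos[of "p * k"] by simp
  then have "sgn (deriv (revenue k) p) = sgn (margin k p)"
    by (simp only: deriv_revenue[OF k p] sgn_mult mult_1)
  also have "\<dots> = sgn (p_opt k - p)"
    using p_opt_root[OF k] p by (cases p "p_opt k" rule: linorder_cases) auto
  finally show ?thesis .
qed

lemma deriv_revenue_pos_iff: "k > 0 \<Longrightarrow> p > 0 \<Longrightarrow> deriv (revenue k) p > 0 \<longleftrightarrow> p < p_opt k"
  using deriv_revenue_sgn by (metis diff_gt_0_iff_gt sgn_greater)

lemma deriv_revenue_neg_iff: "k > 0 \<Longrightarrow> p > 0 \<Longrightarrow> deriv (revenue k) p < 0 \<longleftrightarrow> p_opt k < p"
  using deriv_revenue_sgn by (metis diff_less_0_iff_less sgn_less)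

lemma deriv_revenue_zero_iff: "k > 0 \<Longrightarrow> p > 0 \<Longrightarrow> deriv (revenue k) p = 0 \<longleftrightarrow> p = p_opt k"
  using deriv_revenue_sgn by (metis eq_iff_diff_eq_0 sgn_eq_0_iff)

lemma revenue_pos: "k > 0 \<Longrightarrow> p > eta \<Longrightarrow> revenue k p > 0"
  using vol_pos[of "p * k"] eta_pos by (simp add: revenue_eq)

lemma revenue_nonpos: "k > 0 \<Longrightarrow> p > 0 \<Longrightarrow> p \<le> eta \<Longrightarrow> revenue k p \<le> 0"
  using vol_pos[of "p * k"] by (simp add: revenue_eq mult_nonpos_nonneg)

lemma revenue_strict_mono: assumes k: "k > 0" and "eta \<le> p" "p < p'" "p' \<le> p_opt k"
  shows "revenue k p < revenue k p'"
proof (rule DERIV_pos_imp_increasing_open[OF assms(3)])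
  fix x assume x: "p < x" "x < p'"
  then have x0: "x > 0" using assms eta_pos by simp
  have "margin k x > 0" using p_opt_root(4)[OF k x0] x assms by simp
  then show "\<exists>y. DERIV (revenue k) x :> y \<and> y > 0"
    using revenue_deriv[OF k x0] k N_pos cap_pos[of "x * k"] x0
    by (intro exI[of _ "k * N * cap (x * k) * margin k x"] conjI) auto
next
  show "continuous_on {p..p'} (revenue k)"
    using assms eta_pos by (intro continuous_at_imp_continuous_on ballI revenue_isCont) auto
qed

lemma revenue_strict_antimono: assumes k: "k > 0" and "p_opt k \<le> p" "p < p'"
  shows "revenue k p' < revenue k p"
proof (rule DERIV_neg_imp_decreasing_open[OF assms(3)])
  fix x assume x: "p < x" "x < p'"
  have "margin k x < 0" using p_opt_root(5)[OF k] x assms by simp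
  moreover have x0: "x > 0" using p_opt_root(1)[OF k] assms x eta_pos by simp
  ultimately show "\<exists>y. DERIV (revenue k) x :> y \<and> y < 0"
    using revenue_deriv[OF k x0] k N_pos cap_pos[of "x * k"]
    by (intro exI[of _ "k * N * cap (x * k) * margin k x"] conjI) (auto simp: mult_pos_neg)
next
  have "p > 0" using p_opt_root(1)[OF k] assms eta_pos by simp
  then show "continuous_on {p..p'} (revenue k)"
    using assms by (intro continuous_at_imp_continuous_on ballI revenue_isCont) auto
qed

lemma revenue_max: assumes k: "k > 0" and p: "p > 0" "p \<noteq> p_opt k"
  shows "revenue k p < revenue k (p_opt k)"
proof -
  have pos: "revenue k (p_opt k) > 0" using revenue_pos[OF k p_opt_root(1)[OF k]] .
  consider "p \<le> eta" | "eta < p" "p < p_opt k" | "p_opt k < p" using p by linarith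
  then show ?thesis
  proof cases
    case 1 then show ?thesis using revenue_nonpos[OF k p(1)] pos by simp
  next
    case 2 then show ?thesis using revenue_strict_mono[OF k] by simp
  next
    case 3 then show ?thesis using revenue_strict_antimono[OF k order_refl] by simp
  qed
qed

lemma feasible_eq: assumes k: "k > 0"
  shows "feasible k k' = {p. eta < p \<and> k' * vol (p * k) \<le> C}"
proof (intro set_eqI iffI)
  fix p assume "p \<in> feasible k k'"
  then have p: "p > 0" "revenue k p > 0" "k' * vol (p * k) \<le> C"
    using k by (auto simp: feasible_def peak_def traffic_eq)
  then have "p > eta" using revenue_nonpos[OF k p(1)] by force
  then show "p \<in> {p. eta < p \<and> k' * vol (p * k) \<le> C}" using p by simp
next
  fix p assume "p \<in> {p. eta < p \<and> k' * vol (p * k) \<le> C}"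
  then have p: "eta < p" "k' * vol (p * k) \<le> C" by auto
  then have "p > 0" using eta_pos by simp
  then show "p \<in> feasible k k'"
    using p revenue_pos[OF k p(1)] k by (simp add: feasible_def peak_def traffic_eq)
qed

text \<open>Raising the price keeps it feasible, since the volume decreases.\<close>
lemma feasible_up_closed: assumes k: "k > 0" and k': "k' \<ge> 0" and x: "x \<in> feasible k k'" and "x \<le> z"
  shows "z \<in> feasible k k'"
proof -
  have x': "eta < x" "k' * vol (x * k) \<le> C" using x feasible_eq[OF k] by auto
  have "vol (z * k) \<le> vol (x * k)"
    using vol_antimono[of "x * k" "z * k"] x' k eta_pos \<open>x \<le> z\<close> by simp
  then have "k' * vol (z * k) \<le> C" using x' k' by (meson mult_left_mono order_trans)
  then show ?thesis using feasible_eq[OF k] x' \<open>x \<le> z\<close> by simp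
qed

lemma feasible_nonempty: assumes k: "k > 0" and k': "k' > 0" shows "feasible k k' \<noteq> {}"
proof -
  obtain q where q: "q > 0" "vol q \<le> C / k'" using vol_small[of "C / k'"] C_pos k' by auto
  define p where "p = max eta (q / k) + 1"
  have p: "p > eta" "p * k > q" using k by (auto simp: p_def pos_divide_less_eq[symmetric])
  have "vol (p * k) \<le> C / k'" using vol_antimono[of q "p * k"] q p by simp
  then have "p \<in> feasible k k'" using feasible_eq[OF k] p k' by (simp add: pos_le_divide_eq mult.commute)
  then show ?thesis by auto
qed

lemma threshold_lower: assumes "k > 0" "p \<in> feasible k k'" shows "threshold k k' \<le> p"
  unfolding threshold_def using assms feasible_eq[OF assms(1)]
  by (intro cInf_lower bdd_belowI[of _ eta]) auto

lemma threshold_ge_eta: assumes "k > 0" "k' > 0" shows "eta \<le> threshold k k'"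
  unfolding threshold_def using feasible_nonempty[OF assms] feasible_eq[OF assms(1)]
  by (intro cInf_greatest) auto

lemma unique_equilibrium:
  assumes x: "x \<in> feasible k k'" and best: "\<And>q. q \<in> feasible k k' \<Longrightarrow> q \<noteq> x \<Longrightarrow> revenue k q < revenue k x"
  shows "(\<exists>!p. is_equilibrium k k' p) \<and> equilibrium k k' = x"
proof -
  have eq: "is_equilibrium k k' x"
    unfolding is_equilibrium_def using x best by (metis less_le_not_le nle_le)
  have uniq: "p = x" if "is_equilibrium k k' p" for p
    using that x best unfolding is_equilibrium_def by (metis not_le)
  have "equilibrium k k' = x" unfolding equilibrium_def using eq uniq by (rule the_equality)
  then show ?thesis using eq uniq by blast
qed

lemma revenue_unimodal_feasible_interval: assumes k: "k > 0" and k': "k' > 0"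
  shows "(\<forall>p>0. revenue k differentiable (at p))
    \<and> (\<exists>ph>eta. (\<forall>p. eta \<le> p \<and> p < ph \<longrightarrow> deriv (revenue k) p > 0)
        \<and> deriv (revenue k) ph = 0 \<and> (\<forall>p>ph. deriv (revenue k) p < 0))
    \<and> feasible k k' \<noteq> {} \<and> connected (feasible k k')"
proof (intro conjI)
  show "\<forall>p>0. revenue k differentiable (at p)"
    using revenue_deriv[OF k] by (auto simp: real_differentiable_def)
  have pos: "p_opt k > 0" using p_opt_root(1)[OF k] eta_pos by simp
  show "\<exists>ph>eta. (\<forall>p. eta \<le> p \<and> p < ph \<longrightarrow> deriv (revenue k) p > 0)
      \<and> deriv (revenue k) ph = 0 \<and> (\<forall>p>ph. deriv (revenue k) p < 0)"
    using p_opt_root(1)[OF k] pos eta_pos deriv_revenue_pos_iff[OF k] deriv_revenue_zero_iff[OF k]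
      deriv_revenue_neg_iff[OF k]
    by (intro exI[of _ "p_opt k"]) auto
  show "feasible k k' \<noteq> {}" by (rule feasible_nonempty[OF k k'])
  show "connected (feasible k k')"
    unfolding connected_iff_interval using feasible_up_closed[OF k] k' by auto
qed

end

section \<open>Opt-saturated networks: the threshold price is the equilibrium\<close>

context cell_market
begin

lemma threshold_saturates: assumes k: "k > 0" and k': "k' > 0" and above: "p_opt k < threshold k k'"
  shows "threshold k k' \<in> feasible k k'" "k' * vol (threshold k k' * k) = C"
proof -
  have F: "feasible k k' = {p. eta < p \<and> k' * vol (p * k) \<le> C}" by (rule feasible_eq[OF k])
  have cont: "isCont (\<lambda>p. k' * vol (p * k)) x" if "eta < x" for x
    using that eta_pos k by (intro continuous_intros vol_scaled_isCont) auto
  show "k' * vol (threshold k k' * k) = C"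
    using Inf_sublevel_boundary[OF cont] feasible_nonempty[OF k k'] above p_opt_root(1)[OF k]
    by (simp add: threshold_def F)
  then show "threshold k k' \<in> feasible k k'"
    using F above p_opt_root(1)[OF k] by simp
qed

text \<open>In the capped regime the threshold price is the inverse of z \<mapsto> C / vol (z * k): the
  peak factor for which the price z exactly saturates the cell.\<close>
lemma threshold_at_saturating_peak: assumes k: "k > 0" and z: "eta < z" "q_full < z * k"
  shows "threshold k (C / vol (z * k)) = z"
proof -
  have V: "vol (z * k) > 0" using vol_pos z eta_pos k by simp
  have "feasible k (C / vol (z * k)) = {z..}"
  proof (intro set_eqI iffI)
    fix p assume "p \<in> feasible k (C / vol (z * k))"
    then have p: "eta < p" "vol (p * k) \<le> vol (z * k)"
      using feasible_eq[OF k] V C_pos by (auto simp: field_simps)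
    then show "p \<in> {z..}"
      using vol_strict_antimono[of "p * k" "z * k"] z k eta_pos by (force simp: not_le)
  next
    fix p assume "p \<in> {z..}"
    then have "vol (p * k) \<le> vol (z * k)" "eta < p"
      using vol_antimono[of "z * k" "p * k"] z k eta_pos by auto
    then show "p \<in> feasible k (C / vol (z * k))"
      using feasible_eq[OF k] V C_pos by (simp add: field_simps)
  qed
  then show ?thesis by (simp add: threshold_def)
qed

lemma threshold_deriv: assumes k: "k > 0" and z: "p_opt k < z"
  shows "\<exists>D>0. DERIV (threshold k) (C / vol (z * k)) :> D"
proof -
  define f where "f y = C / vol (y * k)" for y
  have zk: "z > eta" "z * k > q_full" "z > 0"
    using z p_opt_root(1,2)[OF k] k eta_pos by (auto intro: less_trans mult_strict_right_mono)
  have V: "vol (z * k) > 0" using vol_pos zk k by simp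
  define D where "D = - C * (dvol (z * k) * k) / (vol (z * k) * vol (z * k))"
  have der: "DERIV f z :> D"
    unfolding f_def[abs_def] D_def using DERIV_divide[OF DERIV_const vol_scaled_deriv[OF k zk(3)]] V
    by simp
  have "dvol (z * k) * k < 0" using dvol_neg zk k by (simp add: mult_neg_pos)
  then have "C * (dvol (z * k) * k) < 0" using C_pos by (simp add: mult_pos_neg)
  then have D: "D > 0" using V by (simp add: D_def divide_neg_pos)
  have inv: "eventually (\<lambda>y. threshold k (f y) = y) (nhds z)"
    using isCont_eventually_less(1)[OF continuous_ident z]
  proof (rule eventually_mono)
    fix y assume "p_opt k < y"
    then have "eta < y" "q_full < y * k"
      using p_opt_root(1,2)[OF k] k by (auto intro: less_trans mult_strict_right_mono)
    then show "threshold k (f y) = y" unfolding f_def by (rule threshold_at_saturating_peak[OF k])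
  qed
  have cont: "eventually (\<lambda>y. isCont f y) (nhds z)"
    using isCont_eventually_less(1)[OF continuous_ident zk(3)]
  proof (rule eventually_mono)
    fix y :: real assume "0 < y"
    then show "isCont f y"
      unfolding f_def[abs_def] using vol_pos[of "y * k"] k
      by (intro continuous_intros vol_scaled_isCont) auto
  qed
  have "DERIV (threshold k) (f z) :> inverse D" by (rule DERIV_local_inverse[OF der D inv cont])
  then show ?thesis using D by (intro exI[of _ "inverse D"]) (simp add: f_def)
qed

lemma opt_saturated: assumes k: "k > 0" and k': "k' > 0"
    and neg: "deriv (revenue k) (threshold k k') < 0"
  shows "(\<exists>!p. is_equilibrium k k' p) \<and> equilibrium k k' = threshold k k'
    \<and> peak k k' (threshold k k') = C
    \<and> (\<exists>D>0. DERIV (threshold k) k' :> D)"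
proof -
  define x0 where "x0 = threshold k k'"
  have x0: "x0 > 0" using threshold_ge_eta[OF k k'] eta_pos by (simp add: x0_def)
  have above: "p_opt k < x0" using neg deriv_revenue_neg_iff[OF k x0] by (simp add: x0_def)
  have sat: "x0 \<in> feasible k k'" "k' * vol (x0 * k) = C"
    using threshold_saturates[OF k k'] above by (simp_all add: x0_def)
  have best: "revenue k q < revenue k x0" if "q \<in> feasible k k'" "q \<noteq> x0" for q
    using revenue_strict_antimono[OF k less_imp_le[OF above]] threshold_lower[OF k that(1)] that(2)
    by (simp add: x0_def)
  have "peak k k' x0 = C" using sat(2) x0 k by (simp add: peak_def traffic_eq)
  moreover have "C / vol (x0 * k) = k'" using sat(2) vol_pos[of "x0 * k"] x0 k by (auto simp: field_simps)
  then have "\<exists>D>0. DERIV (threshold k) k' :> D" using threshold_deriv[OF k above] by simp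
  ultimately show ?thesis using unique_equilibrium[OF sat(1) best] by (simp add: x0_def)
qed

end

section \<open>Opt-unsaturated networks: the revenue optimum is the equilibrium\<close>

context cell_market
begin

lemma equilibrium_at_p_opt: assumes k: "k > 0" and feas: "p_opt k \<in> feasible k k'"
  shows "(\<exists>!p. is_equilibrium k k' p) \<and> equilibrium k k' = p_opt k"
proof (rule unique_equilibrium[OF feas])
  fix q assume "q \<in> feasible k k'" "q \<noteq> p_opt k"
  moreover have "q \<in> feasible k k' \<Longrightarrow> q > 0" using feasible_eq[OF k] eta_pos by auto
  ultimately show "revenue k q < revenue k (p_opt k)" using revenue_max[OF k] by blast
qed

lemma p_opt_unsaturated: assumes k: "k > 0" and k': "k' > 0" and below: "threshold k k' < p_opt k"
  shows "k' * vol (p_opt k * k) < C"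
proof -
  obtain x where x: "x \<in> feasible k k'" "x < p_opt k"
    using cInf_lessD[OF feasible_nonempty[OF k k']] below by (auto simp: threshold_def)
  then have x': "eta < x" "k' * vol (x * k) \<le> C" using feasible_eq[OF k] by auto
  have "vol (p_opt k * k) < vol (x * k)"
    using vol_strict_antimono[of "x * k" "p_opt k * k"] x x' p_opt_root(2)[OF k] k eta_pos by simp
  then show ?thesis using x' k' by (meson mult_strict_left_mono less_le_trans)
qed

text \<open>At an optimal price p with effective price z = p * k the cost ratio eta / p equals
  cost_ratio z, so the kappa_avg for which z is optimal is opt_kavg z.\<close>
definition cost_ratio :: "real \<Rightarrow> real" where "cost_ratio z = 1 - elast_ratio (served z) / bet"
definition opt_kavg :: "real \<Rightarrow> real" where "opt_kavg z = z * cost_ratio z / eta"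

lemma margin_zero_iff_cost_ratio: assumes "q_full < p * k" "p > 0"
  shows "margin k p = 0 \<longleftrightarrow> cost_ratio (p * k) = eta / p"
proof -
  have "margin k p = 0 \<longleftrightarrow> lerner_gap k p = 0" using margin_factor[OF assms(1)] by simp
  also have "\<dots> \<longleftrightarrow> cost_ratio (p * k) = eta / p"
    using bet_gt1 by (auto simp: lerner_gap_def cost_ratio_def field_simps)
  finally show ?thesis .
qed

lemma opt_kavg_at_p_opt: assumes k: "k > 0" shows "opt_kavg (p_opt k * k) = k" "cost_ratio (p_opt k * k) > 0"
proof -
  have p: "p_opt k > 0" using p_opt_root(1)[OF k] eta_pos by simp
  have c: "cost_ratio (p_opt k * k) = eta / p_opt k"
    using margin_zero_iff_cost_ratio[OF p_opt_root(2)[OF k] p] p_opt_root(3)[OF k] by simp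
  then show "opt_kavg (p_opt k * k) = k" using p eta_pos by (simp add: opt_kavg_def)
  show "cost_ratio (p_opt k * k) > 0" using c p eta_pos by simp
qed

lemma p_opt_at_opt_kavg: assumes z: "q_full < z" and k: "opt_kavg z > 0"
  shows "p_opt (opt_kavg z) * opt_kavg z = z"
proof -
  define p where "p = z / opt_kavg z"
  have z0: "z > 0" using z q_full_pos by simp
  have p: "p > 0" "p * opt_kavg z = z" using k z0 by (auto simp: p_def)
  have "cost_ratio (p * opt_kavg z) = eta / p"
    using p k z0 eta_pos by (simp add: p_def opt_kavg_def field_simps)
  then have "margin (opt_kavg z) p = 0" using margin_zero_iff_cost_ratio p z by simp
  then show ?thesis using margin_zero_iff[OF k p(1)] p by simp
qed

lemma cost_ratio_mono: assumes "q_full < z" "z \<le> z'" shows "cost_ratio z \<le> cost_ratio z'"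
proof -
  have z: "z > 0" using assms q_full_pos by simp
  have "elast_ratio (served z') \<le> elast_ratio (served z)"
    using served_antimono[OF z assms(2)] served_pos[of z'] served_lt1[OF assms(1)] z assms
    by (intro elast_ratio_mono) auto
  then show ?thesis using bet_gt1 by (simp add: cost_ratio_def divide_right_mono)
qed

lemma cost_ratio_differentiable: "q_full < z \<Longrightarrow> cost_ratio differentiable (at z)"
  unfolding cost_ratio_def[abs_def]
  by (intro derivative_intros differentiable_chain_at[unfolded o_def, OF served_differentiable]
      elast_ratio_differentiable served_lt1) (use bet_gt1 in auto)

text \<open>opt_kavg increases strictly where the cost ratio is positive, since the cost ratio
  itself is nondecreasing.\<close>
lemma opt_kavg_deriv: assumes z: "q_full < z" and pos: "cost_ratio z > 0"
  shows "\<exists>D>0. DERIV opt_kavg z :> D"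
proof -
  obtain H where H: "DERIV cost_ratio z :> H"
    using cost_ratio_differentiable[OF z] by (auto simp: real_differentiable_def)
  have "H \<ge> 0" by (rule DERIV_nonneg_if_right_mono[OF H]) (use cost_ratio_mono z in auto)
  moreover have "DERIV opt_kavg z :> (1 * cost_ratio z + H * z) / eta"
    unfolding opt_kavg_def[abs_def] by (rule DERIV_cdivide[OF DERIV_mult[OF DERIV_ident H]])
  moreover have "z > 0" using z q_full_pos by simp
  ultimately have "(1 * cost_ratio z + H * z) / eta > 0"
    using pos eta_pos by (simp add: add_pos_nonneg)
  then show ?thesis using \<open>DERIV opt_kavg z :> _\<close> by blast
qed

lemma opt_kavg_isCont: assumes "q_full < z" shows "isCont opt_kavg z"
proof -
  have "isCont cost_ratio z"
    using cost_ratio_differentiable[OF assms] by (rule differentiable_imp_continuous_within)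
  then show ?thesis unfolding opt_kavg_def[abs_def] using eta_pos by (intro continuous_intros) auto
qed

text \<open>When the optimum is strictly feasible, the optimal effective price p* k increases with k:
  near k, p* k is the inverse of the increasing function opt_kavg.\<close>
lemma equilibrium_effective_price_deriv: assumes k: "k > 0" and k': "k' > 0"
    and slack: "k' * vol (p_opt k * k) < C"
  shows "\<exists>D>0. DERIV (\<lambda>k. equilibrium k k' * k) k :> D"
proof -
  define z0 where "z0 = p_opt k * k"
  have z0: "q_full < z0" "opt_kavg z0 = k" "cost_ratio z0 > 0"
    using p_opt_root(2)[OF k] opt_kavg_at_p_opt[OF k] by (simp_all add: z0_def)
  have z0pos: "z0 > 0" using z0(1) q_full_pos by simp
  have capped: "eventually (\<lambda>z. q_full < z) (nhds z0)"
    by (rule isCont_eventually_less(1)[OF continuous_ident z0(1)])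
  have kpos: "eventually (\<lambda>z. 0 < opt_kavg z) (nhds z0)"
    using isCont_eventually_less(1)[OF opt_kavg_isCont[OF z0(1)]] z0(2) k by simp
  have "isCont (\<lambda>z. k' * vol z) z0" using vol_isCont[OF z0pos] by (intro continuous_intros)
  then have fits: "eventually (\<lambda>z. k' * vol z < C) (nhds z0)"
    using isCont_eventually_less(2) slack by (simp add: z0_def)
  have near: "eventually (\<lambda>z. q_full < z \<and> 0 < opt_kavg z \<and> k' * vol z < C) (nhds z0)"
    using capped kpos fits by (intro eventually_conj)
  have inv: "eventually (\<lambda>z. equilibrium (opt_kavg z) k' * opt_kavg z = z) (nhds z0)"
    using near
  proof (rule eventually_mono, elim conjE)
    fix z assume z: "q_full < z" "0 < opt_kavg z" "k' * vol z < C"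
    have pz: "p_opt (opt_kavg z) * opt_kavg z = z" by (rule p_opt_at_opt_kavg[OF z(1,2)])
    then have "p_opt (opt_kavg z) \<in> feasible (opt_kavg z) k'"
      using feasible_eq[OF z(2)] p_opt_root(1)[OF z(2)] z(3) by simp
    then show "equilibrium (opt_kavg z) k' * opt_kavg z = z"
      using equilibrium_at_p_opt[OF z(2)] pz by simp
  qed
  have cont: "eventually (\<lambda>z. isCont opt_kavg z) (nhds z0)"
    using near by (rule eventually_mono) (auto intro: opt_kavg_isCont)
  obtain D where D: "D > 0" "DERIV opt_kavg z0 :> D" using opt_kavg_deriv[OF z0(1,3)] by blast
  have "DERIV (\<lambda>k. equilibrium k k' * k) (opt_kavg z0) :> inverse D"
    by (rule DERIV_local_inverse[OF D(2,1) inv cont])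
  then show ?thesis using D z0(2) by (intro exI[of _ "inverse D"]) simp
qed

lemma opt_unsaturated: assumes k: "k > 0" and k': "k' > 0"
    and pos: "deriv (revenue k) (threshold k k') > 0"
  shows "(\<exists>!p. is_equilibrium k k' p) \<and> peak k k' (equilibrium k k') \<noteq> C
    \<and> deriv (revenue k) (equilibrium k k') = 0
    \<and> (\<forall>p>0. deriv (revenue k) p = 0 \<longrightarrow> p = equilibrium k k')
    \<and> (\<exists>D>0. DERIV (\<lambda>k. equilibrium k k' * k) k :> D)"
proof -
  have x0: "threshold k k' > 0" using threshold_ge_eta[OF k k'] eta_pos by simp
  have below: "threshold k k' < p_opt k" using pos deriv_revenue_pos_iff[OF k x0] by simp
  have popt: "p_opt k > 0" using p_opt_root(1)[OF k] eta_pos by simp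
  have slack: "k' * vol (p_opt k * k) < C" by (rule p_opt_unsaturated[OF k k' below])
  then have "p_opt k \<in> feasible k k'" using feasible_eq[OF k] p_opt_root(1)[OF k] by simp
  then have eq: "(\<exists>!p. is_equilibrium k k' p) \<and> equilibrium k k' = p_opt k"
    by (rule equilibrium_at_p_opt[OF k])
  moreover have "peak k k' (p_opt k) \<noteq> C" using slack popt k by (simp add: peak_def traffic_eq)
  moreover have "deriv (revenue k) p = 0 \<longleftrightarrow> p = p_opt k" if "p > 0" for p
    by (rule deriv_revenue_zero_iff[OF k that])
  ultimately show ?thesis using popt equilibrium_effective_price_deriv[OF k k' slack] by auto
qed

end

theorem proposition2:
  fixes N Phimax \<sigma> \<theta> \<eta> C ka kp :: real
    and nT :: nat and w :: "nat \<Rightarrow> real"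
    and X :: "real \<Rightarrow> real \<Rightarrow> real"
    and R :: "real \<Rightarrow> real \<Rightarrow> real"
    and A :: "real \<Rightarrow> real \<Rightarrow> real \<Rightarrow> real"
    and P :: "real \<Rightarrow> real \<Rightarrow> real set"
    and p0 :: "real \<Rightarrow> real \<Rightarrow> real"
    and is_eq :: "real \<Rightarrow> real \<Rightarrow> real \<Rightarrow> bool"
    and peq :: "real \<Rightarrow> real \<Rightarrow> real"
  assumes N_pos: "N > 0" and C_pos: "C > 0" and Phimax_pos: "Phimax > 0"
    and sigma: "0 < \<sigma>" "\<sigma> < 1"
    and theta: "0 < \<theta>" "\<theta> < 1"
    and eta_pos: "\<eta> > 0"
    and nT_pos: "nT \<ge> 1"
    and w_pos: "\<forall>t\<in>{1..nT}. w t > 0" and w_sum: "(\<Sum>t = 1..nT. w t) = 1"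
    and ka: "0 < ka" "ka \<le> 1" and kp: "0 < kp" "kp \<le> 1"
  defines "X \<equiv> \<lambda>k p. Xtot N Phimax \<sigma> nT w \<theta> k p"
    and "R \<equiv> \<lambda>k p. (p - \<eta>) * k * X k p"
    and "A \<equiv> \<lambda>k k' p. k' * X k p"
    and "P \<equiv> \<lambda>k k'. {p. 0 < p \<and> R k p > 0 \<and> A k k' p \<le> C}"
    and "p0 \<equiv> \<lambda>k k'. Inf (P k k')"
    and "is_eq \<equiv> \<lambda>k k' p. p \<in> P k k' \<and> (\<forall>q\<in>P k k'. R k q \<le> R k p)"
    and "peq \<equiv> \<lambda>k k'. THE p. is_eq k k' p"
  shows
    "((\<forall>p>0. R ka differentiable (at p))
      \<and> (\<exists>ph>\<eta>. (\<forall>p. \<eta> \<le> p \<and> p < ph \<longrightarrow> deriv (R ka) p > 0)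
               \<and> deriv (R ka) ph = 0
               \<and> (\<forall>p>ph. deriv (R ka) p < 0))
      \<and> P ka kp \<noteq> {} \<and> connected (P ka kp))
   \<and> (deriv (R ka) (p0 ka kp) < 0 \<longrightarrow>
        (\<exists>!p. is_eq ka kp p) \<and> peq ka kp = p0 ka kp
        \<and> A ka kp (p0 ka kp) = C
        \<and> (\<exists>D>0. ((\<lambda>k'. p0 ka k') has_real_derivative D) (at kp)))
   \<and> (deriv (R ka) (p0 ka kp) > 0 \<longrightarrow>
        (\<exists>!p. is_eq ka kp p) \<and> A ka kp (peq ka kp) \<noteq> C
        \<and> deriv (R ka) (peq ka kp) = 0
        \<and> (\<forall>p>0. deriv (R ka) p = 0 \<longrightarrow> p = peq ka kp)
        \<and> (\<exists>D>0. ((\<lambda>k. peq k kp * k) has_real_derivative D) (at ka)))"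
proof -
  interpret M: cell_market N Phimax \<sigma> \<theta> \<eta> C nT w
    by unfold_locales (use N_pos Phimax_pos sigma theta eta_pos C_pos w_sum in auto)
  have "X = M.traffic" by (simp add: X_def M.traffic_def[abs_def])
  then have market: "R = M.revenue" "A = M.peak" "P = M.feasible" "p0 = M.threshold"
      "is_eq = M.is_equilibrium" "peq = M.equilibrium"
    by (simp_all add: R_def A_def P_def p0_def is_eq_def peq_def M.revenue_def[abs_def]
        M.peak_def[abs_def] M.feasible_def[abs_def] M.threshold_def[abs_def]
        M.is_equilibrium_def[abs_def] M.equilibrium_def[abs_def])
  show ?thesis
    unfolding market
    using M.revenue_unimodal_feasible_interval[OF ka(1) kp(1)]
      M.opt_saturated[OF ka(1) kp(1)] M.opt_unsaturated[OF ka(1) kp(1)]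
    by blast
qed

end
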